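(* Let $\widehat{\mathbf{H}}_u,\mathbf{L}_1\in\mathbb{R}^{N_s\times N_b}$, $\lambda>0$, $\gamma_u\ge0$, $\beta_u\in\mathbb{R}$, $\mu_0>0$, $\rho>1$, $\mu_{\max}\ge\mu_0$. Let $f(\mathbf{L})=\|\mathbf{L}\|_*+\gamma_u\|\mathbf{L}-\beta_u\mathbf{L}_1\|_F^2$ and $g(\mathbf{S})=\lambda\|\mathbf{S}\|_1$, and consider the sequence $\{(\mathbf{L}_u^k,\mathbf{S}_u^k,\mathbf{Y}^k)\}_{k\ge0}$ generated from $\mathbf{S}_u^0=\mathbf{0}$, $\mathbf{Y}^0=\mathbf{0}$ by $$\mathbf{L}_u^{k+1}=\arg\min_{\mathbf{L}} f(\mathbf{L})+\tfrac{\mu_k}{2}\bigl\|\mathbf{L}-(\widehat{\mathbf{H}}_u-\mathbf{S}_u^k+\tfrac{1}{\mu_k}\mathbf{Y}^k)\bigr\|_F^2,$$ $$\mathbf{S}_u^{k+1}=\arg\min_{\mathbf{S}} g(\mathbf{S})+\tfrac{\mu_k}{2}\bigl\|\mathbf{S}-(\widehat{\mathbf{H}}_u-\mathbf{L}_u^{k+1}+\tfrac{1}{\mu_k}\mathbf{Y}^k)\bigr\|_F^2,$$ $$\mathbf{Y}^{k+1}=\mathbf{Y}^k+\mu_k(\widehat{\mathbf{H}}_u-\mathbf{L}_u^{k+1}-\mathbf{S}_u^{k+1}),\qquad \mu_{k+1}=\min\{\rho\mu_k,\mu_{\max}\}.$$ Then the sequence $\{(\mathbf{L}_u^k,\mathbf{S}_u^k)\}$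 is bounded.
   Context: $\|\cdot\|_*$ is the nuclear norm, $\|\cdot\|_1$ the entrywise $\ell_1$-norm, $\|\cdot\|_F$ the Frobenius norm. These iterations are the ADMM scheme for $\min_{\mathbf{L},\mathbf{S}} f(\mathbf{L})+g(\mathbf{S})$ subject to $\mathbf{L}+\mathbf{S}=\widehat{\mathbf{H}}_u$, with augmented Lagrangian $\mathcal{L}_\mu(\mathbf{L},\mathbf{S},\mathbf{Y})=f(\mathbf{L})+g(\mathbf{S})+\langle\mathbf{Y},\widehat{\mathbf{H}}_u-\mathbf{L}-\mathbf{S}\rangle+\frac{\mu}{2}\|\widehat{\mathbf{H}}_u-\mathbf{L}-\mathbf{S}\|_F^2$, $\langle\mathbf{A},\mathbf{B}\rangle=\mathrm{tr}(\mathbf{A}^\top\mathbf{B})$. *)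

theory Defs
  imports "HOL-Analysis.Analysis"
begin

text \<open>Matrices in R^(Ns x Nb) are rendered as real^'b^'s (rows indexed by 's, columns by 'b).\<close>

definition frob_norm :: "real^'b^'s \<Rightarrow> real" where
  "frob_norm A = sqrt (\<Sum>i\<in>UNIV. \<Sum>j\<in>UNIV. (A $ i $ j)\<^sup>2)"

definition l1_norm :: "real^'b^'s \<Rightarrow> real" where
  "l1_norm A = (\<Sum>i\<in>UNIV. \<Sum>j\<in>UNIV. \<bar>A $ i $ j\<bar>)"

definition psd :: "real^'n^'n \<Rightarrow> bool" where
  "psd P \<longleftrightarrow> transpose P = P \<and> (\<forall>x. 0 \<le> x \<bullet> (P *v x))"

text \<open>Nuclear (trace) norm: trace of the unique positive semidefinite square root
  of A^T A, i.e. the sum of the singular values of A.\<close>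
definition nuclear_norm :: "real^'b^'s \<Rightarrow> real" where
  "nuclear_norm A = trace (THE P :: real^'b^'b. psd P \<and> P ** P = transpose A ** A)"

end

theory Submission
  imports Defs
begin

(* Both f and g are convex and finite everywhere; for the nuclear norm this comes from the formula
   ||A||_* = sum of ||A b|| over an orthonormal eigenbasis b of A^T A, obtained by diagonalising the
   unique positive semidefinite square root of A^T A.  Since f >= 0 and g >= lam ||.||, the splitting
   problem min f(L) + g(H - L) has a minimiser Ls, and a separating hyperplane for the convex set
   {(L + S - H, t) | f L + g S < t} provides a multiplier Ys that is a subgradient of f at Ls and of
   g at Ss = H - Ls.  The optimality conditions of the two proximal steps say that
   Y_k + mu_k (H - L_(k+1) - S_k) is a subgradient of f at L_(k+1) and that Y_(k+1) is a subgradient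
   of g at S_(k+1).  Monotonicity of subgradients then makes ||S_k - Ss||^2 + (||Y_k - Ys|| / mu_k)^2
   nonincreasing, as mu_k is nondecreasing.  This bounds S_k and Y_k (using mu_k <= mu_max), and
   L_(k+1) = H - S_(k+1) - (Y_(k+1) - Y_k) / mu_k is bounded because mu_k >= mu_0 > 0. *)

section \<open>Orthonormal eigenbases of symmetric matrices\<close>

lemma inner_transpose_matrix_vector:
  fixes A :: "real^'n^'m"
  shows "x \<bullet> (transpose A *v y) = (A *v x) \<bullet> y"
  by (metis dot_lmul_matrix inner_commute transpose_matrix_vector)

lemma matrix_vector_mult_sum_scaleR:
  fixes M :: "real^'n^'m"
  shows "M *v (\<Sum>b\<in>B. c b *\<^sub>R v b) = (\<Sum>b\<in>B. c b *\<^sub>R (M *v v b))"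
proof -
  have "linear (\<lambda>x. M *v x)" by simp
  then show ?thesis by (simp add: linear_sum o_def matrix_vector_mult_scaleR)
qed

lemma le_of_le_add_mult_small:
  fixes a b K :: real
  assumes le: "\<And>t. 0 < t \<Longrightarrow> t < 1 \<Longrightarrow> a \<le> b + t * K" and K: "0 \<le> K"
  shows "a \<le> b"
proof (rule field_le_epsilon)
  fix e :: real
  assume e: "0 < e"
  define t where "t = min (1/2) (e / (K + 1))"
  have t: "0 < t" "t < 1" using e K by (auto simp: t_def)
  have "t * K \<le> e / (K + 1) * K" using K by (intro mult_right_mono) (auto simp: t_def)
  also have "\<dots> \<le> e" using e K by (simp add: field_simps)
  finally show "a \<le> b + e" using le[OF t] by simp
qed

definition orthonormal_basis :: "(real^'n) set \<Rightarrow> bool" where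
  "orthonormal_basis B \<longleftrightarrow> finite B \<and> span B = UNIV \<and> pairwise orthogonal B \<and> (\<forall>b\<in>B. norm b = 1)"

lemma orthonormal_basis_inner:
  assumes "orthonormal_basis B" "b \<in> B" "c \<in> B"
  shows "b \<bullet> c = (if b = c then 1 else 0)"
  using assms by (auto simp: orthonormal_basis_def pairwise_def orthogonal_def norm_eq_1)

lemma orthonormal_basis_inner_sum:
  assumes B: "orthonormal_basis B" and b: "b \<in> B"
  shows "b \<bullet> (\<Sum>c\<in>B. f c *\<^sub>R c) = f b"
proof -
  have "b \<bullet> (\<Sum>c\<in>B. f c *\<^sub>R c) = (\<Sum>c\<in>B. if c = b then f c else 0)"
    by (auto simp: inner_sum_right orthonormal_basis_inner[OF B b] intro!: sum.cong)
  also have "\<dots> = f b" using B b by (simp add: orthonormal_basis_def)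
  finally show ?thesis .
qed

lemma orthonormal_basis_expansion:
  assumes B: "orthonormal_basis B"
  shows "x = (\<Sum>b\<in>B. (b \<bullet> x) *\<^sub>R b)"
proof -
  have "finite B" "x \<in> span B" using B by (auto simp: orthonormal_basis_def)
  then obtain u where u: "x = (\<Sum>b\<in>B. u b *\<^sub>R b)" using span_finite by auto
  then have "b \<bullet> x = u b" if "b \<in> B" for b using orthonormal_basis_inner_sum[OF B that] by simp
  then show ?thesis by (subst u) (auto intro: sum.cong)
qed

lemma orthonormal_basis_parseval:
  assumes "orthonormal_basis B"
  shows "x \<bullet> y = (\<Sum>b\<in>B. (b \<bullet> x) * (b \<bullet> y))"
  by (subst orthonormal_basis_expansion[OF assms, of x]) (simp add: inner_sum_left)

lemma matrix_eq_on_orthonormal_basis: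
  fixes P Q :: "real^'n^'m"
  assumes B: "orthonormal_basis B" and eq: "\<And>b. b \<in> B \<Longrightarrow> P *v b = Q *v b"
  shows "P = Q"
proof (subst matrix_eq, intro allI)
  fix x
  have "P *v x = (\<Sum>b\<in>B. (b \<bullet> x) *\<^sub>R (P *v b))"
    by (subst orthonormal_basis_expansion[OF B, of x]) (rule matrix_vector_mult_sum_scaleR)
  also have "\<dots> = Q *v x"
    by (subst (2) orthonormal_basis_expansion[OF B, of x])
      (simp add: matrix_vector_mult_sum_scaleR eq)
  finally show "P *v x = Q *v x" .
qed

lemma trace_eq_sum_orthonormal_basis:
  fixes P :: "real^'n^'n"
  assumes B: "orthonormal_basis B"
  shows "trace P = (\<Sum>b\<in>B. b \<bullet> (P *v b))"
proof -
  have "(\<Sum>b\<in>B. b \<bullet> (P *v b)) = (\<Sum>i\<in>UNIV. \<Sum>j\<in>UNIV. P$i$j * (\<Sum>b\<in>B. b$i * b$j))"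
    unfolding inner_vec_def matrix_vector_mult_def sum_distrib_left
    by (subst sum.swap, rule sum.cong, simp, subst sum.swap) (simp add: sum_distrib_left mult_ac)
  also have "\<dots> = (\<Sum>i\<in>UNIV. \<Sum>j\<in>UNIV. P$i$j * (axis i 1 \<bullet> axis j (1::real)))"
    using orthonormal_basis_parseval[OF B, of "axis _ 1" "axis _ 1"]
    by (simp add: inner_axis mult.commute)
  also have "\<dots> = trace P"
    by (simp add: trace_def inner_axis_axis if_distrib cong: if_cong)
  finally show ?thesis by simp
qed

lemma eigenvector_of_maximal_quadratic_form:
  fixes M :: "real^'n^'n"
  assumes sym: "transpose M = M" and W: "subspace W" and inv: "\<And>x. x \<in> W \<Longrightarrow> M *v x \<in> W"
    and v: "v \<in> W" "v \<bullet> v = 1"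
    and max: "\<And>x. x \<in> W \<Longrightarrow> x \<bullet> (M *v x) \<le> (v \<bullet> (M *v v)) * (x \<bullet> x)"
  shows "M *v v = (v \<bullet> (M *v v)) *\<^sub>R v"
proof -
  define l where "l = v \<bullet> (M *v v)"
  define w where "w = M *v v - l *\<^sub>R v"
  have Mv: "M *v v = w + l *\<^sub>R v" unfolding w_def by simp
  have w: "w \<in> W" unfolding w_def using v W inv by (simp add: subspace_diff subspace_scale)
  have vw: "v \<bullet> w = 0" unfolding w_def l_def by (simp add: inner_diff_right v(2))
  have wMv: "w \<bullet> (M *v v) = w \<bullet> w" unfolding Mv by (simp add: inner_add_right inner_commute vw)
  have vMw: "v \<bullet> (M *v w) = w \<bullet> w"
    using inner_transpose_matrix_vector[of v M w] wMv sym by (simp add: inner_commute)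
  \<comment> \<open>w must vanish, since otherwise v + t w would beat the maximum for small t > 0.\<close>
  have "2 * (w \<bullet> w) \<le> 0 + t * \<bar>l * (w \<bullet> w) - w \<bullet> (M *v w)\<bar>" if t: "0 < t" "t < 1" for t
  proof -
    have "v + t *\<^sub>R w \<in> W" using v w W by (simp add: subspace_add subspace_scale)
    from max[OF this]
    have "l + 2 * t * (w \<bullet> w) + t\<^sup>2 * (w \<bullet> (M *v w)) \<le> l * (1 + t\<^sup>2 * (w \<bullet> w))"
      by (simp add: matrix_vector_right_distrib matrix_vector_mult_scaleR inner_add_left
          inner_add_right vMw wMv vw v(2) inner_commute l_def power2_eq_square algebra_simps)
    then have "t * (2 * (w \<bullet> w)) \<le> t * (t * (l * (w \<bullet> w) - w \<bullet> (M *v w)))"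
      by (simp add: algebra_simps power2_eq_square)
    then have "2 * (w \<bullet> w) \<le> t * (l * (w \<bullet> w) - w \<bullet> (M *v w))" using t by simp
    also have "\<dots> \<le> t * \<bar>l * (w \<bullet> w) - w \<bullet> (M *v w)\<bar>" using t by (intro mult_left_mono) auto
    finally show ?thesis by simp
  qed
  then have "2 * (w \<bullet> w) \<le> 0" by (rule le_of_le_add_mult_small[OF _ abs_ge_zero])
  then have "w \<bullet> w = 0" using inner_ge_zero[of w] by linarith
  then have "w = 0" by simp
  then show ?thesis using Mv l_def by simp
qed

lemma symmetric_matrix_eigenvector_in_subspace:
  fixes M :: "real^'n^'n"
  assumes sym: "transpose M = M" and W: "subspace W" and inv: "\<And>x. x \<in> W \<Longrightarrow> M *v x \<in> W"
    and nontriv: "W \<noteq> {0}"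
  obtains v l where "v \<in> W" "norm v = 1" "M *v v = l *\<^sub>R v"
proof -
  obtain x0 where x0: "x0 \<in> W" "x0 \<noteq> 0" using nontriv W subspace_0 by blast
  define U where "U = W \<inter> sphere 0 1"
  have "compact U" unfolding U_def
    using closed_subspace[OF W] compact_sphere by (metis Int_commute compact_Int_closed)
  moreover have "x0 /\<^sub>R norm x0 \<in> U" using x0 W by (simp add: U_def subspace_scale)
  moreover have "continuous_on U (\<lambda>x. x \<bullet> (M *v x))"
    by (intro continuous_intros linear_continuous_on matrix_vector_mul_bounded_linear)
  ultimately obtain v where "v \<in> U" and vmax: "\<And>y. y \<in> U \<Longrightarrow> y \<bullet> (M *v y) \<le> v \<bullet> (M *v v)"
    using continuous_attains_sup[of U] by blast
  then have v: "v \<in> W" "norm v = 1" by (auto simp: U_def)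
  have "x \<bullet> (M *v x) \<le> (v \<bullet> (M *v v)) * (x \<bullet> x)" if "x \<in> W" for x
  proof (cases "x = 0")
    case False
    have "x /\<^sub>R norm x \<in> U" using that False W by (simp add: U_def subspace_scale)
    from vmax[OF this] have "(x \<bullet> (M *v x)) / (norm x)\<^sup>2 \<le> v \<bullet> (M *v v)"
      by (simp add: matrix_vector_mult_scaleR power2_eq_square field_simps)
    then show ?thesis using False by (simp add: divide_le_eq power2_norm_eq_inner)
  qed simp
  then have "M *v v = (v \<bullet> (M *v v)) *\<^sub>R v"
    using eigenvector_of_maximal_quadratic_form[OF sym W inv v(1)] v(2) by (simp add: norm_eq_1)
  with v that show thesis by blast
qed

lemma symmetric_matrix_invariant_orthogonal_complement:
  fixes M :: "real^'n^'n"
  assumes sym: "transpose M = M" and inv: "\<And>x. x \<in> W \<Longrightarrow> M *v x \<in> W"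
    and v: "M *v v = l *\<^sub>R v" and x: "x \<in> W \<inter> {x. v \<bullet> x = 0}"
  shows "M *v x \<in> W \<inter> {x. v \<bullet> x = 0}"
proof -
  have "v \<bullet> (M *v x) = (M *v v) \<bullet> x"
    using inner_transpose_matrix_vector[of v M x] sym by simp
  then show ?thesis using x inv v by auto
qed

lemma span_insert_orthogonal_complement:
  fixes v :: "'a::real_inner"
  assumes W: "subspace W" and v: "v \<in> W" "v \<bullet> v = 1"
    and B: "B \<subseteq> W" "span B = W \<inter> {x. v \<bullet> x = 0}"
  shows "span (insert v B) = W"
proof
  show "span (insert v B) \<subseteq> W" using B(1) v(1) W by (intro span_minimal) auto
  show "W \<subseteq> span (insert v B)"
  proof
    fix x assume "x \<in> W"
    then have "x - (v \<bullet> x) *\<^sub>R v \<in> span B"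
      using v W B(2) by (simp add: subspace_diff subspace_scale inner_diff_right)
    then have "x - (v \<bullet> x) *\<^sub>R v + (v \<bullet> x) *\<^sub>R v \<in> span (insert v B)"
      by (meson span_add span_base span_mono span_scale insertI1 subset_insertI subsetD)
    then show "x \<in> span (insert v B)" by simp
  qed
qed

lemma symmetric_matrix_orthonormal_eigenbasis_of_subspace:
  fixes M :: "real^'n^'n"
  assumes sym: "transpose M = M"
  shows "subspace W \<Longrightarrow> (\<And>x. x \<in> W \<Longrightarrow> M *v x \<in> W) \<Longrightarrow>
    \<exists>B. B \<subseteq> W \<and> finite B \<and> span B = W \<and> pairwise orthogonal B \<and>
        (\<forall>b\<in>B. norm b = 1 \<and> (\<exists>l. M *v b = l *\<^sub>R b))"
proof (induction "dim W" arbitrary: W rule: less_induct)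
  case less
  show ?case
  proof (cases "W = {0}")
    case True
    then show ?thesis by (intro exI[of _ "{}"]) auto
  next
    case False
    obtain v l where v: "v \<in> W" "norm v = 1" "M *v v = l *\<^sub>R v"
      using symmetric_matrix_eigenvector_in_subspace[OF sym less.prems False] by blast
    have vv: "v \<bullet> v = 1" using v(2) by (simp add: norm_eq_1)
    define W' where "W' = W \<inter> {x. v \<bullet> x = 0}"
    have W': "subspace W'"
      unfolding W'_def using less.prems(1) subspace_hyperplane subspace_inter by blast
    have inv': "M *v x \<in> W'" if "x \<in> W'" for x
      using symmetric_matrix_invariant_orthogonal_complement[OF sym less.prems(2) v(3)] that
      by (simp add: W'_def)
    have "v \<notin> W'" using vv by (simp add: W'_def)
    then have "W' \<subset> W" using v(1) unfolding W'_def by blast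
    then have "dim W' < dim W"
      using dim_psubset[of W' W] W' less.prems(1) by (metis span_eq_iff)
    then obtain B' where B': "B' \<subseteq> W'" "finite B'" "span B' = W'" "pairwise orthogonal B'"
      "\<forall>b\<in>B'. norm b = 1 \<and> (\<exists>l. M *v b = l *\<^sub>R b)"
      using less.hyps[OF _ W' inv'] by blast
    have "span (insert v B') = W"
      using span_insert_orthogonal_complement[OF less.prems(1) v(1) vv] B'(1,3) by (auto simp: W'_def)
    moreover have "pairwise orthogonal (insert v B')"
      using B'(1,4) unfolding pairwise_insert W'_def orthogonal_def by (auto simp: inner_commute)
    moreover have "insert v B' \<subseteq> W" using B'(1) v(1) by (auto simp: W'_def)
    moreover have "\<forall>b\<in>insert v B'. norm b = 1 \<and> (\<exists>l. M *v b = l *\<^sub>R b)" using B'(5) v by auto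
    ultimately show ?thesis using B'(2) by (intro exI[of _ "insert v B'"]) blast
  qed
qed

lemma symmetric_matrix_orthonormal_eigenbasis:
  fixes M :: "real^'n^'n"
  assumes "transpose M = M"
  obtains B where "orthonormal_basis B" "\<And>b. b \<in> B \<Longrightarrow> \<exists>l. M *v b = l *\<^sub>R b"
  using symmetric_matrix_orthonormal_eigenbasis_of_subspace[OF assms, of UNIV]
  unfolding orthonormal_basis_def by auto

section \<open>The nuclear norm\<close>

definition right_singular_basis :: "real^'b^'s \<Rightarrow> (real^'b) set \<Rightarrow> bool" where
  "right_singular_basis A B \<longleftrightarrow>
     orthonormal_basis B \<and> (\<forall>b\<in>B. \<exists>l. transpose A *v (A *v b) = l *\<^sub>R b)"

lemma right_singular_basis_exists:
  fixes A :: "real^'b^'s"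
  obtains B where "right_singular_basis A B"
proof -
  have "transpose (transpose A ** A) = transpose A ** A" by (simp add: matrix_transpose_mul)
  then obtain B where "orthonormal_basis B" "\<And>b. b \<in> B \<Longrightarrow> \<exists>l. (transpose A ** A) *v b = l *\<^sub>R b"
    using symmetric_matrix_orthonormal_eigenbasis by blast
  then have "right_singular_basis A B"
    by (simp add: right_singular_basis_def matrix_vector_mul_assoc)
  then show thesis by (rule that)
qed

lemma right_singular_basis_eigen:
  assumes "right_singular_basis A B" "b \<in> B"
  shows "(transpose A ** A) *v b = (norm (A *v b))\<^sup>2 *\<^sub>R b"
proof -
  obtain l where l: "transpose A *v (A *v b) = l *\<^sub>R b"
    using assms by (auto simp: right_singular_basis_def)
  have "b \<bullet> b = 1"
    using assms orthonormal_basis_inner by (fastforce simp: right_singular_basis_def)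
  then have "l = b \<bullet> (transpose A *v (A *v b))" using l by simp
  also have "\<dots> = (A *v b) \<bullet> (A *v b)" by (rule inner_transpose_matrix_vector)
  also have "\<dots> = (norm (A *v b))\<^sup>2" by (simp add: power2_norm_eq_inner)
  finally show ?thesis using l by (simp add: matrix_vector_mul_assoc)
qed

lemma right_singular_basis_scaleR:
  assumes "right_singular_basis A B"
  shows "right_singular_basis (c *\<^sub>R A) B"
proof -
  have "transpose (c *\<^sub>R A) *v ((c *\<^sub>R A) *v x) = (c * c) *\<^sub>R (transpose A *v (A *v x))" for x
    by (simp add: transpose_scalar scaleR_matrix_vector_assoc[symmetric] matrix_vector_mult_scaleR
        del: transpose_matrix_vector)
  then show ?thesis using assms by (fastforce simp: right_singular_basis_def)
qed

definition spectral_matrix :: "(real^'n) set \<Rightarrow> (real^'n \<Rightarrow> real) \<Rightarrow> real^'n^'n" where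
  "spectral_matrix B s = (\<chi> i j. \<Sum>b\<in>B. s b * b$i * b$j)"

lemma spectral_matrix_mult_vector:
  "spectral_matrix B s *v x = (\<Sum>b\<in>B. (s b * (b \<bullet> x)) *\<^sub>R b)"
proof -
  have "(spectral_matrix B s *v x) $ i = (\<Sum>b\<in>B. (s b * (b \<bullet> x)) *\<^sub>R b) $ i" for i
  proof -
    have "(spectral_matrix B s *v x) $ i = (\<Sum>j\<in>UNIV. \<Sum>b\<in>B. s b * b$i * b$j * x$j)"
      by (simp add: spectral_matrix_def matrix_vector_mult_def sum_distrib_right)
    also have "\<dots> = (\<Sum>b\<in>B. \<Sum>j\<in>UNIV. s b * b$i * b$j * x$j)" by (rule sum.swap)
    also have "\<dots> = (\<Sum>b\<in>B. (s b * (b \<bullet> x)) *\<^sub>R b) $ i"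
      by (simp add: inner_vec_def sum_distrib_left sum_distrib_right sum_component mult_ac)
    finally show ?thesis .
  qed
  then show ?thesis by (simp add: vec_eq_iff)
qed

lemma spectral_matrix_eigen:
  assumes "orthonormal_basis B" "b \<in> B"
  shows "spectral_matrix B s *v b = s b *\<^sub>R b"
proof -
  have "(\<Sum>c\<in>B. (s c * (c \<bullet> b)) *\<^sub>R c) = (\<Sum>c\<in>B. if c = b then s b *\<^sub>R b else 0)"
    using assms by (intro sum.cong) (auto simp: orthonormal_basis_inner)
  also have "\<dots> = s b *\<^sub>R b" using assms by (simp add: orthonormal_basis_def)
  finally show ?thesis by (simp add: spectral_matrix_mult_vector)
qed

lemma psd_spectral_matrix:
  fixes B :: "(real^'n) set"
  assumes "\<And>b. b \<in> B \<Longrightarrow> 0 \<le> s b"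
  shows "psd (spectral_matrix B s)"
  unfolding psd_def
proof (intro conjI allI)
  show "transpose (spectral_matrix B s) = spectral_matrix B s"
    by (simp add: spectral_matrix_def transpose_def vec_eq_iff mult_ac)
  fix x :: "real^'n"
  have "x \<bullet> (spectral_matrix B s *v x) = (\<Sum>b\<in>B. s b * (b \<bullet> x)\<^sup>2)"
    by (simp add: spectral_matrix_mult_vector inner_sum_right inner_commute power2_eq_square mult_ac)
  also have "\<dots> \<ge> 0" using assms by (intro sum_nonneg) simp
  finally show "0 \<le> x \<bullet> (spectral_matrix B s *v x)" .
qed

lemma psd_sqrt_eigen:
  fixes Q :: "real^'n^'n"
  assumes Q: "psd Q" and QQ: "Q *v (Q *v b) = s\<^sup>2 *\<^sub>R b" and s: "0 \<le> s"
  shows "Q *v b = s *\<^sub>R b"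
proof (cases "s = 0")
  case True
  have "(Q *v b) \<bullet> (Q *v b) = b \<bullet> (Q *v (Q *v b))"
    using Q inner_transpose_matrix_vector[of b Q "Q *v b"] by (simp add: psd_def)
  then show ?thesis using QQ True by simp
next
  case False
  define w where "w = Q *v b - s *\<^sub>R b"
  have "Q *v w = - s *\<^sub>R w"
    by (simp add: w_def matrix_vector_mult_diff_distrib matrix_vector_mult_scaleR QQ
        algebra_simps power2_eq_square)
  then have "s * (w \<bullet> w) = - (w \<bullet> (Q *v w))" by simp
  also have "\<dots> \<le> 0" using Q by (simp add: psd_def)
  finally have "w \<bullet> w = 0" using s False inner_ge_zero[of w]
    by (simp add: mult_le_0_iff)
  then show ?thesis by (simp add: w_def)
qed

lemma psd_sqrt_iff_spectral_matrix:
  fixes M :: "real^'n^'n"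
  assumes B: "orthonormal_basis B" and s: "\<And>b. b \<in> B \<Longrightarrow> 0 \<le> s b"
    and M: "\<And>b. b \<in> B \<Longrightarrow> M *v b = (s b)\<^sup>2 *\<^sub>R b"
  shows "psd Q \<and> Q ** Q = M \<longleftrightarrow> Q = spectral_matrix B s"
proof
  assume Q: "psd Q \<and> Q ** Q = M"
  show "Q = spectral_matrix B s"
  proof (rule matrix_eq_on_orthonormal_basis[OF B])
    fix b assume b: "b \<in> B"
    with Q M have "Q *v (Q *v b) = (s b)\<^sup>2 *\<^sub>R b" by (simp add: matrix_vector_mul_assoc)
    then have "Q *v b = s b *\<^sub>R b" using Q s[OF b] by (intro psd_sqrt_eigen) auto
    then show "Q *v b = spectral_matrix B s *v b" using spectral_matrix_eigen[OF B b] by simp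
  qed
next
  assume Q: "Q = spectral_matrix B s"
  have "Q ** Q = M"
  proof (rule matrix_eq_on_orthonormal_basis[OF B])
    fix b assume b: "b \<in> B"
    then have "Q *v (Q *v b) = (s b)\<^sup>2 *\<^sub>R b"
      by (simp add: Q spectral_matrix_eigen[OF B] matrix_vector_mult_scaleR power2_eq_square)
    then show "(Q ** Q) *v b = M *v b" by (simp add: M[OF b] matrix_vector_mul_assoc)
  qed
  then show "psd Q \<and> Q ** Q = M" using psd_spectral_matrix[of B s] s Q by simp
qed

theorem nuclear_norm_eq_sum_norm:
  fixes A :: "real^'b^'s"
  assumes B: "right_singular_basis A B"
  shows "nuclear_norm A = (\<Sum>b\<in>B. norm (A *v b))"
proof -
  have onb: "orthonormal_basis B" using B by (simp add: right_singular_basis_def)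
  define P where "P = spectral_matrix B (\<lambda>b. norm (A *v b))"
  have "psd Q \<and> Q ** Q = transpose A ** A \<longleftrightarrow> Q = P" for Q
    unfolding P_def using onb right_singular_basis_eigen[OF B]
    by (intro psd_sqrt_iff_spectral_matrix) auto
  then have "nuclear_norm A = trace P" by (simp add: nuclear_norm_def)
  also have "\<dots> = (\<Sum>b\<in>B. b \<bullet> (P *v b))" by (rule trace_eq_sum_orthonormal_basis[OF onb])
  also have "\<dots> = (\<Sum>b\<in>B. norm (A *v b))"
    using onb by (intro sum.cong) (auto simp: P_def spectral_matrix_eigen orthonormal_basis_inner)
  finally show ?thesis .
qed

lemma nuclear_norm_nonneg: "0 \<le> nuclear_norm A"
proof -
  obtain B where "right_singular_basis A B" by (rule right_singular_basis_exists)
  then show ?thesis by (simp add: nuclear_norm_eq_sum_norm sum_nonneg)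
qed

lemma nuclear_norm_scaleR: "nuclear_norm (c *\<^sub>R A) = \<bar>c\<bar> * nuclear_norm A"
proof -
  obtain B where B: "right_singular_basis A B" by (rule right_singular_basis_exists)
  then show ?thesis
    using nuclear_norm_eq_sum_norm[OF right_singular_basis_scaleR[OF B, of c]]
    by (simp add: nuclear_norm_eq_sum_norm[OF B] scaleR_matrix_vector_assoc[symmetric] sum_distrib_left)
qed

lemma sum_inner_le_nuclear_norm:
  fixes A :: "real^'b^'s"
  assumes E: "orthonormal_basis E" and orth: "pairwise (\<lambda>e e'. orthogonal (u e) (u e')) E"
    and u: "\<And>e. e \<in> E \<Longrightarrow> norm (u e) \<le> 1"
  shows "(\<Sum>e\<in>E. u e \<bullet> (A *v e)) \<le> nuclear_norm A"
proof -
  obtain R where R: "right_singular_basis A R" by (rule right_singular_basis_exists)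
  then have onbR: "orthonormal_basis R" by (simp add: right_singular_basis_def)
  have finE: "finite E" using E by (simp add: orthonormal_basis_def)
  have "(\<Sum>e\<in>E. u e \<bullet> (A *v e)) = (\<Sum>e\<in>E. \<Sum>r\<in>R. (r \<bullet> e) * (u e \<bullet> (A *v r)))"
    by (subst (1) orthonormal_basis_expansion[OF onbR])
      (simp add: matrix_vector_mult_sum_scaleR inner_sum_right)
  also have "\<dots> = (\<Sum>r\<in>R. (\<Sum>e\<in>E. (r \<bullet> e) *\<^sub>R u e) \<bullet> (A *v r))"
    by (subst sum.swap) (simp add: inner_sum_left)
  also have "\<dots> \<le> (\<Sum>r\<in>R. norm (A *v r))"
  proof (rule sum_mono)
    fix r assume r: "r \<in> R"
    let ?v = "\<Sum>e\<in>E. (r \<bullet> e) *\<^sub>R u e"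
    have "(norm ?v)\<^sup>2 = (\<Sum>e\<in>E. (r \<bullet> e)\<^sup>2 * (norm (u e))\<^sup>2)"
      using finE orth by (simp add: norm_sum_Pythagorean pairwise_ortho_scaleR power_mult_distrib)
    also have "\<dots> \<le> (\<Sum>e\<in>E. (r \<bullet> e)\<^sup>2)"
      using u by (intro sum_mono) (simp add: mult_left_le power_le_one)
    also have "\<dots> = r \<bullet> r"
      using orthonormal_basis_parseval[OF E, of r r] by (simp add: power2_eq_square inner_commute)
    also have "\<dots> = 1" using orthonormal_basis_inner[OF onbR r r] by simp
    finally have "norm ?v \<le> 1" by (simp add: power_le_one_iff)
    then show "?v \<bullet> (A *v r) \<le> norm (A *v r)"
      using norm_cauchy_schwarz[of ?v "A *v r"] mult_right_mono[of "norm ?v" 1 "norm (A *v r)"]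
      by simp
  qed
  also have "\<dots> = nuclear_norm A" using nuclear_norm_eq_sum_norm[OF R] by simp
  finally show ?thesis .
qed

lemma nuclear_norm_triangle: "nuclear_norm (A + B) \<le> nuclear_norm A + nuclear_norm B"
proof -
  obtain E where E: "right_singular_basis (A + B) E" by (rule right_singular_basis_exists)
  then have onbE: "orthonormal_basis E" by (simp add: right_singular_basis_def)
  define u where "u e = (1 / norm ((A + B) *v e)) *\<^sub>R ((A + B) *v e)" for e
  have "orthogonal (u e) (u e')" if ee: "e \<in> E" "e' \<in> E" "e \<noteq> e'" for e e'
  proof -
    obtain l where "transpose (A + B) *v ((A + B) *v e') = l *\<^sub>R e'"
      using E ee(2) by (auto simp: right_singular_basis_def)
    then have "((A + B) *v e) \<bullet> ((A + B) *v e') = 0"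
      using inner_transpose_matrix_vector[of e "A + B"] orthonormal_basis_inner[OF onbE ee(1,2)] ee(3)
      by (metis inner_scaleR_right mult_zero_right)
    then show ?thesis by (simp add: u_def orthogonal_def)
  qed
  then have orth: "pairwise (\<lambda>e e'. orthogonal (u e) (u e')) E" by (simp add: pairwise_def)
  have u: "norm (u e) \<le> 1" for e by (cases "(A + B) *v e = 0") (auto simp: u_def)
  have ue: "u e \<bullet> ((A + B) *v e) = norm ((A + B) *v e)" for e
    by (cases "(A + B) *v e = 0") (auto simp: u_def dot_square_norm power2_eq_square)
  have "nuclear_norm (A + B) = (\<Sum>e\<in>E. u e \<bullet> ((A + B) *v e))"
    by (simp add: nuclear_norm_eq_sum_norm[OF E] ue)
  also have "\<dots> = (\<Sum>e\<in>E. u e \<bullet> (A *v e)) + (\<Sum>e\<in>E. u e \<bullet> (B *v e))"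
    by (simp add: matrix_vector_mult_add_rdistrib inner_add_right sum.distrib)
  also have "\<dots> \<le> nuclear_norm A + nuclear_norm B"
    by (intro add_mono sum_inner_le_nuclear_norm[OF onbE orth u])
  finally show ?thesis .
qed

lemma convex_on_nuclear_norm: "convex_on UNIV (nuclear_norm :: real^'b^'s \<Rightarrow> real)"
proof (rule convex_onI)
  fix t :: real and x y :: "real^'b^'s"
  assume t: "0 < t" "t < 1"
  have "nuclear_norm ((1 - t) *\<^sub>R x + t *\<^sub>R y) \<le> nuclear_norm ((1 - t) *\<^sub>R x) + nuclear_norm (t *\<^sub>R y)"
    by (rule nuclear_norm_triangle)
  also have "\<dots> = (1 - t) * nuclear_norm x + t * nuclear_norm y" using t by (simp add: nuclear_norm_scaleR)
  finally show "nuclear_norm ((1 - t) *\<^sub>R x + t *\<^sub>R y) \<le> (1 - t) * nuclear_norm x + t * nuclear_norm y" .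
qed simp

lemma frob_norm_eq_norm: "frob_norm A = norm A"
  by (simp add: frob_norm_def norm_vec_def L2_set_def sum_nonneg)

lemma norm_le_l1_norm: "norm A \<le> l1_norm A"
proof -
  have "norm A \<le> (\<Sum>i\<in>UNIV. norm (A $ i))" unfolding norm_vec_def by (rule L2_set_le_sum) simp
  also have "\<dots> \<le> (\<Sum>i\<in>UNIV. \<Sum>j\<in>UNIV. \<bar>A $ i $ j\<bar>)"
    unfolding norm_vec_def by (intro sum_mono order_trans[OF L2_set_le_sum]) simp_all
  finally show ?thesis unfolding l1_norm_def .
qed

lemma convex_on_l1_norm: "convex_on UNIV (l1_norm :: real^'b^'s \<Rightarrow> real)"
proof (rule convex_onI)
  fix t :: real and x y :: "real^'b^'s"
  assume t: "0 < t" "t < 1"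
  have "\<bar>(1 - t) * a + t * b\<bar> \<le> (1 - t) * \<bar>a\<bar> + t * \<bar>b\<bar>" for a b :: real
    using abs_triangle_ineq[of "(1 - t) * a" "t * b"] t by (simp add: abs_mult)
  then show "l1_norm ((1 - t) *\<^sub>R x + t *\<^sub>R y) \<le> (1 - t) * l1_norm x + t * l1_norm y"
    unfolding l1_norm_def by (simp add: sum_distrib_left sum.distrib[symmetric] sum_mono)
qed simp

lemma convex_on_power2_norm_diff: "convex_on UNIV (\<lambda>x::'a::real_inner. (norm (x - c))\<^sup>2)"
proof (rule convex_onI)
  fix t :: real and x y :: 'a
  assume t: "0 < t" "t < 1"
  have "(1 - t) *\<^sub>R x + t *\<^sub>R y - c = (1 - t) *\<^sub>R (x - c) + t *\<^sub>R (y - c)"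
    by (simp add: algebra_simps)
  moreover have "(1 - t) * (a \<bullet> a) + t * (b \<bullet> b) - ((1 - t) *\<^sub>R a + t *\<^sub>R b) \<bullet> ((1 - t) *\<^sub>R a + t *\<^sub>R b)
      = t * (1 - t) * ((a - b) \<bullet> (a - b))" for a b :: 'a
    by (simp add: inner_add_left inner_add_right inner_diff_left inner_diff_right inner_commute
        algebra_simps power2_eq_square)
  moreover have "0 \<le> t * (1 - t) * ((a - b) \<bullet> (a - b))" for a b :: 'a using t by simp
  ultimately show "(norm ((1 - t) *\<^sub>R x + t *\<^sub>R y - c))\<^sup>2 \<le> (1 - t) * (norm (x - c))\<^sup>2 + t * (norm (y - c))\<^sup>2"
    by (simp add: power2_norm_eq_inner) (smt (verit))
qed simp

section \<open>Subgradients and the splitting problem\<close>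

definition subgradient :: "('a::real_inner \<Rightarrow> real) \<Rightarrow> 'a \<Rightarrow> 'a \<Rightarrow> bool" where
  "subgradient f x y \<longleftrightarrow> (\<forall>z. f x + y \<bullet> (z - x) \<le> f z)"

lemma subgradient_monotone:
  assumes "subgradient f x u" "subgradient f y v"
  shows "0 \<le> (u - v) \<bullet> (x - y)"
proof -
  have "f x + u \<bullet> (y - x) \<le> f y" "f y + v \<bullet> (x - y) \<le> f x"
    using assms by (auto simp: subgradient_def)
  then show ?thesis by (simp add: inner_diff_left inner_diff_right inner_commute algebra_simps)
qed

lemma subgradient_of_prox_minimizer:
  fixes x c :: "'a::real_inner"
  assumes m: "0 < m" and h: "convex_on UNIV h"
    and min: "\<And>z. h x + m/2 * (norm (x - c))\<^sup>2 \<le> h z + m/2 * (norm (z - c))\<^sup>2"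
  shows "subgradient h x (m *\<^sub>R (c - x))"
  unfolding subgradient_def
proof
  fix z
  define d where "d = z - x"
  have "h x \<le> (h z + m * ((x - c) \<bullet> d)) + t * (m/2 * (d \<bullet> d))" if t: "0 < t" "t < 1" for t
  proof -
    have "h x + m/2 * (norm (x - c))\<^sup>2 \<le> h (x + t *\<^sub>R d) + m/2 * (norm (x + t *\<^sub>R d - c))\<^sup>2"
      by (rule min)
    also have "h (x + t *\<^sub>R d) \<le> (1 - t) * h x + t * h z"
      using convex_onD[OF h, of t x z] t by (simp add: d_def algebra_simps)
    also have "(norm (x + t *\<^sub>R d - c))\<^sup>2 = (norm (x - c))\<^sup>2 + 2 * t * ((x - c) \<bullet> d) + t\<^sup>2 * (d \<bullet> d)"
      unfolding power2_norm_eq_inner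
      by (simp add: inner_add_left inner_add_right inner_diff_left inner_diff_right inner_commute
          power2_eq_square algebra_simps)
    finally have "t * h x \<le> t * (h z + m * ((x - c) \<bullet> d) + t * (m/2 * (d \<bullet> d)))"
      by (simp add: algebra_simps power2_eq_square)
    then show ?thesis using t by simp
  qed
  moreover have "0 \<le> m/2 * (d \<bullet> d)" using m by simp
  ultimately have "h x \<le> h z + m * ((x - c) \<bullet> d)" by (rule le_of_le_add_mult_small)
  then show "h x + (m *\<^sub>R (c - x)) \<bullet> (z - x) \<le> h z"
    by (simp add: d_def inner_diff_left inner_diff_right algebra_simps)
qed

lemma convex_strict_epigraph_sum:
  fixes f g :: "'a::real_vector \<Rightarrow> real"
  assumes f: "convex_on UNIV f" and g: "convex_on UNIV g"
  shows "convex {(L + S - H, t) | L S t. f L + g S < t}"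
proof (rule convexI)
  fix x y and u v :: real
  assume "x \<in> {(L + S - H, t) | L S t. f L + g S < t}" "y \<in> {(L + S - H, t) | L S t. f L + g S < t}"
    and uv: "0 \<le> u" "0 \<le> v" "u + v = 1"
  then obtain L1 S1 t1 L2 S2 t2
    where x: "x = (L1 + S1 - H, t1)" "f L1 + g S1 < t1"
      and y: "y = (L2 + S2 - H, t2)" "f L2 + g S2 < t2"
    by blast
  define L where "L = u *\<^sub>R L1 + v *\<^sub>R L2"
  define S where "S = u *\<^sub>R S1 + v *\<^sub>R S2"
  have "f L \<le> u * f L1 + v * f L2" "g S \<le> u * g S1 + v * g S2"
    using convex_onD[OF f, of v L1 L2] convex_onD[OF g, of v S1 S2] uv
    by (auto simp: L_def S_def eq_diff_eq[symmetric])
  moreover have "u * (f L1 + g S1) + v * (f L2 + g S2) < u * t1 + v * t2"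
  proof -
    have "u * (f L1 + g S1) \<le> u * t1" "v * (f L2 + g S2) \<le> v * t2"
      using uv x(2) y(2) by (auto intro: mult_left_mono)
    moreover have "u * (f L1 + g S1) < u * t1 \<or> v * (f L2 + g S2) < v * t2"
      using uv x(2) y(2) by (cases "u = 0") auto
    ultimately show ?thesis by linarith
  qed
  moreover have "u *\<^sub>R x + v *\<^sub>R y = (L + S - H, u * t1 + v * t2)"
    using uv by (simp add: x y L_def S_def algebra_simps flip: scaleR_add_left)
  ultimately have "f L + g S < u * t1 + v * t2" and "u *\<^sub>R x + v *\<^sub>R y = (L + S - H, u * t1 + v * t2)"
    by (simp_all add: algebra_simps)
  then show "u *\<^sub>R x + v *\<^sub>R y \<in> {(L + S - H, t) | L S t. f L + g S < t}" by blast
qed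

lemma separating_hyperplane_strict_epigraph_sum:
  fixes f g :: "'a::euclidean_space \<Rightarrow> real"
  assumes f: "convex_on UNIV f" and g: "convex_on UNIV g"
    and p: "\<And>L S. L + S = H \<Longrightarrow> p \<le> f L + g S"
  obtains Z c b where "(Z, c) \<noteq> 0" "\<And>L S t. f L + g S < t \<Longrightarrow> Z \<bullet> (L + S - H) + c * t \<le> b"
    "b \<le> c * p"
proof -
  define A where "A = {(L + S - H, t) | L S t. f L + g S < t}"
  have "(0, p) \<notin> A"
  proof
    assume "(0, p) \<in> A"
    then obtain L S where "L + S - H = 0" "f L + g S < p" by (auto simp: A_def)
    with p[of L S] show False by simp
  qed
  then have "A \<inter> {(0, p)} = {}" by blast
  moreover have "(0 + 0 - H, f 0 + g 0 + 1) \<in> A" unfolding A_def by fastforce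
  then have "A \<noteq> {}" by blast
  moreover have "convex A" unfolding A_def by (rule convex_strict_epigraph_sum[OF f g])
  ultimately have "\<exists>a b. a \<noteq> 0 \<and> (\<forall>x\<in>A. a \<bullet> x \<le> b) \<and> (\<forall>x\<in>{(0, p)}. b \<le> a \<bullet> x)"
    by (intro separating_hyperplane_sets convex_singleton) auto
  then obtain a b where "a \<noteq> 0" and sepA: "\<forall>x\<in>A. a \<bullet> x \<le> b" and sep0: "b \<le> a \<bullet> (0, p)"
    by blast
  obtain Z c where a: "a = (Z, c)" by (cases a)
  show thesis
  proof (rule that)
    show "(Z, c) \<noteq> 0" using \<open>a \<noteq> 0\<close> by (simp add: a)
    show "Z \<bullet> (L + S - H) + c * t \<le> b" if "f L + g S < t" for L S t
      using sepA that unfolding A_def a by fastforce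
    show "b \<le> c * p" using sep0 by (simp add: a)
  qed
qed

lemma lagrange_multiplier_exists:
  fixes f g :: "'a::euclidean_space \<Rightarrow> real"
  assumes f: "convex_on UNIV f" and g: "convex_on UNIV g"
    and p: "\<And>L S. L + S = H \<Longrightarrow> p \<le> f L + g S"
  obtains Y where "\<And>L S. p + Y \<bullet> (L + S - H) \<le> f L + g S"
proof -
  obtain Z c b where "(Z, c) \<noteq> 0"
    and hA: "\<And>L S t. f L + g S < t \<Longrightarrow> Z \<bullet> (L + S - H) + c * t \<le> b" and b: "b \<le> c * p"
    using separating_hyperplane_strict_epigraph_sum[OF f g p] by blast
  \<comment> \<open>The hyperplane is not vertical because f and g are finite everywhere.\<close>
  have "c < 0"
  proof (rule ccontr)
    assume "\<not> c < 0"
    show False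
    proof (cases "c = 0")
      case True
      then have "Z \<noteq> 0" using \<open>(Z, c) \<noteq> 0\<close> by (simp add: zero_prod_def)
      define s where "s = (\<bar>b\<bar> + 1) / (Z \<bullet> Z)"
      have "Z \<bullet> ((H + s *\<^sub>R Z) + 0 - H) + c * (f (H + s *\<^sub>R Z) + g 0 + 1) \<le> b" by (rule hA) simp
      then show False using True \<open>Z \<noteq> 0\<close> by (simp add: s_def)
    next
      case False
      then have "0 < c" using \<open>\<not> c < 0\<close> by simp
      have "c * p \<le> c * (f H + g 0)" using p[of H 0] \<open>0 < c\<close> by simp
      then have "c * (f H + g 0 + 1) \<le> c * (f H + g 0)"
        using hA[of H 0 "f H + g 0 + 1"] b by simp
      then show False using \<open>0 < c\<close> by simp
    qed
  qed
  define d where "d = - c"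
  have "0 < d" using \<open>c < 0\<close> by (simp add: d_def)
  have "p + ((1 / d) *\<^sub>R Z) \<bullet> (L + S - H) \<le> f L + g S" for L S
  proof (rule field_le_epsilon)
    fix e :: real
    assume "0 < e"
    then have "d * p + Z \<bullet> (L + S - H) \<le> d * (f L + g S + e)"
      using hA[of L S "f L + g S + e"] b by (simp add: d_def algebra_simps)
    then have "d * (p + (1 / d) * (Z \<bullet> (L + S - H))) \<le> d * (f L + g S + e)"
      using \<open>0 < d\<close> by (simp add: algebra_simps)
    then show "p + ((1 / d) *\<^sub>R Z) \<bullet> (L + S - H) \<le> f L + g S + e"
      using \<open>0 < d\<close> by simp
  qed
  then show thesis by (rule that)
qed

lemma common_subgradient_of_minimizer:
  fixes f g :: "'a::euclidean_space \<Rightarrow> real"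
  assumes f: "convex_on UNIV f" and g: "convex_on UNIV g"
    and min: "\<And>L. f L0 + g (H - L0) \<le> f L + g (H - L)"
  obtains Y where "subgradient f L0 Y" "subgradient g (H - L0) Y"
proof -
  have "f L0 + g (H - L0) \<le> f L + g S" if "L + S = H" for L S
    using min[of L] that by (simp add: eq_diff_eq[symmetric] add.commute)
  then obtain Y where Y: "\<And>L S. f L0 + g (H - L0) + Y \<bullet> (L + S - H) \<le> f L + g S"
    using lagrange_multiplier_exists[OF f g] by blast
  have "subgradient f L0 Y" unfolding subgradient_def
    using Y[of _ "H - L0"] by (simp add: algebra_simps)
  moreover have "subgradient g (H - L0) Y" unfolding subgradient_def
    using Y[of L0] by (simp add: algebra_simps)
  ultimately show thesis by (rule that)
qed

lemma continuous_attains_min_coercive: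
  fixes \<phi> :: "'a::heine_borel \<Rightarrow> real"
  assumes cont: "continuous_on UNIV \<phi>" and lam: "0 < lam"
    and coercive: "\<And>x. lam * dist x z \<le> \<phi> x"
  obtains x where "\<And>y. \<phi> x \<le> \<phi> y"
proof -
  define R where "R = \<phi> z / lam"
  have "z \<in> cball z R" using coercive[of z] lam by (simp add: R_def)
  then obtain x where x: "x \<in> cball z R" and min: "\<And>y. y \<in> cball z R \<Longrightarrow> \<phi> x \<le> \<phi> y"
    using continuous_attains_inf[OF compact_cball _ continuous_on_subset[OF cont]] by blast
  have "\<phi> x \<le> \<phi> y" for y
  proof (cases "y \<in> cball z R")
    case False
    then have "\<phi> z < lam * dist y z" using lam by (simp add: R_def dist_commute field_simps)
    then show ?thesis using min[of z] coercive[of y] \<open>z \<in> cball z R\<close> by simp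
  qed (rule min)
  then show thesis by (rule that)
qed

lemma splitting_kkt_point_exists:
  fixes f g :: "'a::euclidean_space \<Rightarrow> real"
  assumes f: "convex_on UNIV f" "\<And>x. 0 \<le> f x"
    and g: "convex_on UNIV g" "0 < lam" "\<And>x. lam * norm x \<le> g x"
  obtains Ls Ys where "subgradient f Ls Ys" "subgradient g (H - Ls) Ys"
proof -
  have cont_f: "continuous_on UNIV f" by (rule convex_on_continuous[OF open_UNIV f(1)])
  have cont_g: "continuous_on UNIV g" by (rule convex_on_continuous[OF open_UNIV g(1)])
  have cont: "continuous_on UNIV (\<lambda>L. f L + g (H - L))"
    by (intro continuous_on_add cont_f continuous_on_compose2[OF cont_g] continuous_intros) auto
  have coercive: "lam * dist L H \<le> f L + g (H - L)" for L
    using f(2)[of L] g(3)[of "H - L"] by (simp add: dist_norm norm_minus_commute)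
  obtain Ls where "\<And>L. f Ls + g (H - Ls) \<le> f L + g (H - L)"
    using continuous_attains_min_coercive[OF cont g(2) coercive] by blast
  then obtain Ys where "subgradient f Ls Ys" "subgradient g (H - Ls) Ys"
    by (rule common_subgradient_of_minimizer[OF f(1) g(1)])
  then show thesis by (rule that)
qed

section \<open>Boundedness of the ADMM iterates\<close>

lemma admm_lyapunov_step:
  fixes H L' S S' Y Y' Ls Ss Ys :: "'a::real_inner"
  assumes mu: "0 < mu"
    and L': "subgradient f L' (Y + mu *\<^sub>R (H - L' - S))"
    and S': "subgradient g S' Y'" and S: "subgradient g S Y"
    and kkt: "subgradient f Ls Ys" "subgradient g Ss Ys" "Ls + Ss = H"
    and Y': "Y' = Y + mu *\<^sub>R (H - L' - S')"
  shows "(norm (S' - Ss))\<^sup>2 + (norm (Y' - Ys) / mu)\<^sup>2 \<le> (norm (S - Ss))\<^sup>2 + (norm (Y - Ys) / mu)\<^sup>2"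
proof -
  define a b p q where "a = S' - Ss" and "b = S - Ss"
    and "p = (1 / mu) *\<^sub>R (Y' - Ys)" and "q = (1 / mu) *\<^sub>R (Y - Ys)"
  have "Y + mu *\<^sub>R (H - L' - S) - Ys = mu *\<^sub>R (p + (a - b))"
    using mu by (simp add: a_def b_def p_def Y' algebra_simps)
  moreover have "L' - Ls = - (a + (p - q))"
    using mu kkt(3) by (simp add: a_def p_def q_def Y' algebra_simps)
  ultimately have "0 \<le> (mu *\<^sub>R (p + (a - b))) \<bullet> (- (a + (p - q)))"
    using subgradient_monotone[OF L' kkt(1)] by (simp only:)
  then have "0 \<le> - (mu * ((p + (a - b)) \<bullet> (a + (p - q))))"
    by (simp only: inner_scaleR_left inner_minus_right)
  then have f_mono: "(p + (a - b)) \<bullet> (a + (p - q)) \<le> 0"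
    using mu by (simp add: mult_le_0_iff)
  have "Y' - Ys = mu *\<^sub>R p" "Y' - Y = mu *\<^sub>R (p - q)" using mu by (simp_all add: p_def q_def algebra_simps)
  then have g_mono: "0 \<le> p \<bullet> a" "0 \<le> (p - q) \<bullet> (a - b)"
    using subgradient_monotone[OF S' kkt(2)] subgradient_monotone[OF S' S] mu
    by (simp_all add: a_def b_def zero_le_mult_iff)
  have "p \<bullet> (p - q) + (a - b) \<bullet> a \<le> 0"
    using f_mono g_mono by (simp add: inner_add_left inner_add_right inner_commute)
  moreover have "(norm p)\<^sup>2 - (norm q)\<^sup>2 \<le> 2 * (p \<bullet> (p - q))" "(norm a)\<^sup>2 - (norm b)\<^sup>2 \<le> 2 * ((a - b) \<bullet> a)"
    using inner_ge_zero[of "p - q"] inner_ge_zero[of "a - b"]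
    by (simp_all add: power2_norm_eq_inner inner_diff_left inner_diff_right inner_commute)
  ultimately have "(norm a)\<^sup>2 + (norm p)\<^sup>2 \<le> (norm b)\<^sup>2 + (norm q)\<^sup>2" by linarith
  then show ?thesis using mu by (simp add: a_def b_def p_def q_def divide_inverse mult.commute)
qed

lemma admm_lyapunov_decreasing:
  fixes L S Y :: "nat \<Rightarrow> 'a::real_inner"
  assumes mu: "\<And>k. 0 < mu k" "\<And>k. mu k \<le> mu (Suc k)"
    and L: "\<And>k. subgradient f (L (Suc k)) (Y k + mu k *\<^sub>R (H - L (Suc k) - S k))"
    and S: "\<And>k. subgradient g (S k) (Y k)"
    and Y: "\<And>k. Y (Suc k) = Y k + mu k *\<^sub>R (H - L (Suc k) - S (Suc k))"
    and kkt: "subgradient f Ls Ys" "subgradient g Ss Ys" "Ls + Ss = H"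
  shows "(norm (S k - Ss))\<^sup>2 + (norm (Y k - Ys) / mu k)\<^sup>2
    \<le> (norm (S 0 - Ss))\<^sup>2 + (norm (Y 0 - Ys) / mu 0)\<^sup>2"
proof (induction k)
  case (Suc k)
  have "(norm (Y (Suc k) - Ys) / mu (Suc k))\<^sup>2 \<le> (norm (Y (Suc k) - Ys) / mu k)\<^sup>2"
    using mu[of k] mu(1)[of "Suc k"] by (intro power_mono divide_left_mono) auto
  then show ?case
    using admm_lyapunov_step[OF mu(1) L S[of "Suc k"] S[of k] kkt Y] Suc.IH by linarith
qed simp

lemma admm_S_and_Y_bounded:
  fixes L S Y :: "nat \<Rightarrow> 'a::real_inner"
  assumes mu: "\<And>k. 0 < mu k" "\<And>k. mu k \<le> mu (Suc k)" "\<And>k. mu k \<le> mu_max"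
    and L: "\<And>k. subgradient f (L (Suc k)) (Y k + mu k *\<^sub>R (H - L (Suc k) - S k))"
    and S: "\<And>k. subgradient g (S k) (Y k)"
    and Y: "\<And>k. Y (Suc k) = Y k + mu k *\<^sub>R (H - L (Suc k) - S (Suc k))"
    and kkt: "subgradient f Ls Ys" "subgradient g Ss Ys" "Ls + Ss = H"
  shows "bounded (range S)" "bounded (range Y)"
proof -
  define r where "r = sqrt ((norm (S 0 - Ss))\<^sup>2 + (norm (Y 0 - Ys) / mu 0)\<^sup>2)"
  have S_near: "norm (S k - Ss) \<le> r" and Y_near: "norm (Y k - Ys) \<le> mu_max * r" for k
  proof -
    note V = admm_lyapunov_decreasing[where mu = mu and L = L and S = S and Y = Y,
        OF mu(1,2) L S Y kkt, of k]
    show "norm (S k - Ss) \<le> r"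
      unfolding r_def using V zero_le_power2[of "norm (Y k - Ys) / mu k"]
      by (intro real_le_rsqrt) linarith
    have "norm (Y k - Ys) / mu k \<le> r"
      unfolding r_def using V zero_le_power2[of "norm (S k - Ss)"]
      by (intro real_le_rsqrt) linarith
    then have "norm (Y k - Ys) \<le> mu k * r" using mu(1)[of k] by (simp add: divide_le_eq mult.commute)
    also have "\<dots> \<le> mu_max * r" using mu(3)[of k] by (intro mult_right_mono) (simp_all add: r_def)
    finally show "norm (Y k - Ys) \<le> mu_max * r" .
  qed
  show "bounded (range S)" unfolding bounded_def
    using S_near by (intro exI[of _ Ss] exI[of _ r]) (auto simp: dist_norm norm_minus_commute)
  show "bounded (range Y)" unfolding bounded_def
    using Y_near by (intro exI[of _ Ys] exI[of _ "mu_max * r"]) (auto simp: dist_norm norm_minus_commute)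
qed

theorem admm_iterates_bounded:
  fixes L S Y :: "nat \<Rightarrow> 'a::real_inner"
  assumes mu: "0 < mu_min" "\<And>k. mu_min \<le> mu k" "\<And>k. mu k \<le> mu (Suc k)" "\<And>k. mu k \<le> mu_max"
    and L: "\<And>k. subgradient f (L (Suc k)) (Y k + mu k *\<^sub>R (H - L (Suc k) - S k))"
    and S: "\<And>k. subgradient g (S k) (Y k)"
    and Y: "\<And>k. Y (Suc k) = Y k + mu k *\<^sub>R (H - L (Suc k) - S (Suc k))"
    and kkt: "subgradient f Ls Ys" "subgradient g Ss Ys" "Ls + Ss = H"
  shows "bounded (range (\<lambda>k. (L k, S k)))"
proof -
  have mu_pos: "0 < mu k" for k using mu(1) mu(2)[of k] by linarith
  note bounded = admm_S_and_Y_bounded[where mu = mu and L = L and S = S and Y = Y,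
      OF mu_pos mu(3,4) L S Y kkt]
  obtain CS where S_bound: "\<And>k. norm (S k) \<le> CS" using bounded(1) by (auto simp: bounded_iff)
  obtain CY where Y_bound: "\<And>k. norm (Y k) \<le> CY" using bounded(2) by (auto simp: bounded_iff)
  have "norm (L (Suc k)) \<le> norm H + CS + 2 * CY / mu_min" for k
  proof -
    have "L (Suc k) = H - S (Suc k) - (1 / mu k) *\<^sub>R (Y (Suc k) - Y k)"
      using mu_pos[of k] by (simp add: Y algebra_simps)
    then have "norm (L (Suc k)) \<le> norm (H - S (Suc k)) + norm ((1 / mu k) *\<^sub>R (Y (Suc k) - Y k))"
      by (simp only: norm_triangle_ineq4)
    also have "\<dots> \<le> norm H + norm (S (Suc k)) + norm (Y (Suc k) - Y k) / mu k"
      using norm_triangle_ineq4[of H "S (Suc k)"] mu_pos[of k] by simp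
    also have "norm (Y (Suc k) - Y k) / mu k \<le> 2 * CY / mu_min"
    proof (rule frac_le)
      show "0 \<le> 2 * CY" using Y_bound[of k] norm_ge_zero[of "Y k"] by linarith
      show "norm (Y (Suc k) - Y k) \<le> 2 * CY"
        using Y_bound[of k] Y_bound[of "Suc k"] norm_triangle_ineq4[of "Y (Suc k)" "Y k"] by linarith
    qed (use mu in auto)
    finally show ?thesis using S_bound[of "Suc k"] by simp
  qed
  then have "norm (L k) \<le> max (norm (L 0)) (norm H + CS + 2 * CY / mu_min)" for k
    by (cases k) (auto simp: le_max_iff_disj)
  then have "bounded (range L)" by (auto simp: bounded_iff)
  then show ?thesis
    by (rule bounded_subset[OF bounded_Times[OF _ bounded(1)]]) auto
qed

lemma clipped_geometric_sequence:
  fixes mu :: "nat \<Rightarrow> real"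
  assumes "0 < mu0" "1 \<le> rho" "mu0 \<le> mumax"
    and mu_0: "mu 0 = mu0" and mu_Suc: "\<And>k. mu (Suc k) = min (rho * mu k) mumax"
  shows "mu0 \<le> mu k" "mu k \<le> mumax" "mu k \<le> mu (Suc k)"
proof -
  have grow: "mu k \<le> rho * mu k" if "mu0 \<le> mu k" for k
    using assms(1,2) that by (simp add: mult_le_cancel_right1)
  have "mu0 \<le> mu k \<and> mu k \<le> mumax" for k
  proof (induction k)
    case (Suc k)
    then show ?case using grow[of k] assms(3) by (auto simp: mu_Suc)
  qed (simp add: mu_0 assms(3))
  with grow show "mu0 \<le> mu k" "mu k \<le> mumax" "mu k \<le> mu (Suc k)"
    by (auto simp: mu_Suc)
qed

theorem admm_prox_iterates_bounded:
  fixes f g :: "'a::euclidean_space \<Rightarrow> real" and L S Y :: "nat \<Rightarrow> 'a"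
  assumes f: "convex_on UNIV f" "\<And>x. 0 \<le> f x"
    and g: "convex_on UNIV g" "0 < lam" "\<And>x. lam * norm x \<le> g x" "g 0 = 0"
    and mu: "0 < mu_min" "\<And>k. mu_min \<le> mu k" "\<And>k. mu k \<le> mu (Suc k)" "\<And>k. mu k \<le> mu_max"
    and S0: "S 0 = 0" and Y0: "Y 0 = 0"
    and L_step: "\<And>k X. f (L (Suc k)) + mu k / 2 * (norm (L (Suc k) - (H - S k + (1 / mu k) *\<^sub>R Y k)))\<^sup>2
          \<le> f X + mu k / 2 * (norm (X - (H - S k + (1 / mu k) *\<^sub>R Y k)))\<^sup>2"
    and S_step: "\<And>k X. g (S (Suc k)) + mu k / 2 * (norm (S (Suc k) - (H - L (Suc k) + (1 / mu k) *\<^sub>R Y k)))\<^sup>2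
          \<le> g X + mu k / 2 * (norm (X - (H - L (Suc k) + (1 / mu k) *\<^sub>R Y k)))\<^sup>2"
    and Y_step: "\<And>k. Y (Suc k) = Y k + mu k *\<^sub>R (H - L (Suc k) - S (Suc k))"
  shows "bounded (range (\<lambda>k. (L k, S k)))"
proof -
  have mu_pos: "0 < mu k" for k using mu(1) mu(2)[of k] by linarith
  obtain Ls Ys where kkt: "subgradient f Ls Ys" "subgradient g (H - Ls) Ys"
    by (rule splitting_kkt_point_exists[OF f g(1-3)])
  have L: "subgradient f (L (Suc k)) (Y k + mu k *\<^sub>R (H - L (Suc k) - S k))" for k
    using subgradient_of_prox_minimizer[OF mu_pos[of k] f(1) L_step[of k]] mu_pos[of k]
    by (simp add: algebra_simps)
  have S: "subgradient g (S k) (Y k)" for k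
  proof (cases k)
    case 0
    have "0 \<le> lam * norm z" for z using g(2) by simp
    then have "0 \<le> g z" for z using g(3)[of z] order_trans by blast
    then show ?thesis using 0 by (simp add: S0 Y0 g(4) subgradient_def)
  next
    case (Suc j)
    then show ?thesis
      using subgradient_of_prox_minimizer[OF mu_pos[of j] g(1) S_step[of j]] mu_pos[of j]
      by (simp add: Y_step algebra_simps)
  qed
  show ?thesis
    by (rule admm_iterates_bounded[where mu = mu and L = L and S = S and Y = Y,
        OF mu L S Y_step kkt]) simp
qed

theorem lemma2:
  fixes H L1 :: "real^'b^'s"
    and lam gam beta mu0 rho mumax :: real
    and L S Y :: "nat \<Rightarrow> real^'b^'s"
    and mu :: "nat \<Rightarrow> real"
    and f g :: "real^'b^'s \<Rightarrow> real"
  assumes "lam > 0" and "gam \<ge> 0" and "mu0 > 0" and "rho > 1" and "mumax \<ge> mu0"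
    and f_def: "\<And>X. f X = nuclear_norm X + gam * (frob_norm (X - beta *\<^sub>R L1))\<^sup>2"
    and g_def: "\<And>X. g X = lam * l1_norm X"
    and S0: "S 0 = 0" and Y0: "Y 0 = 0" and mu_0: "mu 0 = mu0"
    and L_step: "\<And>k X. f (L (Suc k)) + mu k / 2 *
              (frob_norm (L (Suc k) - (H - S k + (1 / mu k) *\<^sub>R Y k)))\<^sup>2
          \<le> f X + mu k / 2 * (frob_norm (X - (H - S k + (1 / mu k) *\<^sub>R Y k)))\<^sup>2"
    and S_step: "\<And>k X. g (S (Suc k)) + mu k / 2 *
              (frob_norm (S (Suc k) - (H - L (Suc k) + (1 / mu k) *\<^sub>R Y k)))\<^sup>2
          \<le> g X + mu k / 2 * (frob_norm (X - (H - L (Suc k) + (1 / mu k) *\<^sub>R Y k)))\<^sup>2"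
    and Y_step: "\<And>k. Y (Suc k) = Y k + mu k *\<^sub>R (H - L (Suc k) - S (Suc k))"
    and mu_step: "\<And>k. mu (Suc k) = min (rho * mu k) mumax"
  shows "bounded (range (\<lambda>k. (L k, S k)))"
proof (rule admm_prox_iterates_bounded[where H = H and Y = Y and mu = mu and lam = lam
      and mu_min = mu0 and mu_max = mumax])
  have f: "f = (\<lambda>X. nuclear_norm X + gam * (norm (X - beta *\<^sub>R L1))\<^sup>2)"
    by (simp add: fun_eq_iff f_def frob_norm_eq_norm)
  show "convex_on UNIV f" unfolding f
    using \<open>gam \<ge> 0\<close> convex_on_nuclear_norm convex_on_power2_norm_diff
    by (intro convex_on_add convex_on_cmul)
  show "0 \<le> f X" for X
    using \<open>gam \<ge> 0\<close> nuclear_norm_nonneg[of X] by (simp add: f)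
  show "convex_on UNIV g" unfolding g_def[abs_def]
    using \<open>lam > 0\<close> convex_on_l1_norm by (intro convex_on_cmul) simp_all
  show "lam * norm X \<le> g X" for X
    using \<open>lam > 0\<close> norm_le_l1_norm[of X] by (simp add: g_def)
  show "g 0 = 0" by (simp add: g_def l1_norm_def)
  show "\<And>k. mu0 \<le> mu k" "\<And>k. mu k \<le> mu (Suc k)" "\<And>k. mu k \<le> mumax"
    using clipped_geometric_sequence[of mu0 rho mumax mu] assms(3-5) mu_0 mu_step by auto
qed (use assms L_step S_step in \<open>simp_all add: frob_norm_eq_norm\<close>)

end
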